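(* There exists a constant $K$ such that $|\dot\lambda_{i,k}(\theta_0)|\le K/i$ for all $i\ge1$ and all $1\le k\le p+q+1$.
   Context: $d_0\in(-1/2,1/2)$; $a(z)=1-\sum_{i=1}^pa_iz^i$, $b(z)=1-\sum_{i=1}^qb_iz^i$ have all roots outside the unit disk and no common factors; $\theta_0=(a_1,\dots,a_p,b_1,\dots,b_q,d_0)$. For $\theta=(\theta_1,\dots,\theta_{p+q},d)$ near $\theta_0$, $a_\theta(z)=1-\sum_{i=1}^p\theta_iz^i$, $b_\theta(z)=1-\sum_{j=1}^q\theta_{p+j}z^j$, and $\dot\lambda_{i,k}(\theta)$ is the $i$-th coefficient of the power series $\frac{\partial}{\partial\theta_k}\big(b_\theta^{-1}(z)a_\theta(z)(1-z)^{d-d_0}a_{\theta_0}^{-1}(z)b_{\theta_0}(z)\big)$ (with $\theta_{p+q+1}=d$). *)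

theory Defs
  imports "HOL-Analysis.Analysis" "HOL-Computational_Algebra.Computational_Algebra"
begin

definition one_minus_poly :: "nat \<Rightarrow> (nat \<Rightarrow> real) \<Rightarrow> real poly" where
  "one_minus_poly n c = 1 - (\<Sum>i=1..n. monom (c i) i)"

text \<open>a_theta and b_theta for a parameter vector theta = (theta_1,...,theta_{p+q+1}),
  stored as a function nat => real (indices 1..p+q+1; theta_{p+q+1} = d).\<close>
definition a_theta :: "nat \<Rightarrow> (nat \<Rightarrow> real) \<Rightarrow> real poly" where
  "a_theta p \<theta> = one_minus_poly p \<theta>"

definition b_theta :: "nat \<Rightarrow> nat \<Rightarrow> (nat \<Rightarrow> real) \<Rightarrow> real poly" where
  "b_theta p q \<theta> = one_minus_poly q (\<lambda>j. \<theta> (p + j))"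

definition one_minus_X_powr :: "real \<Rightarrow> real fps" where
  "one_minus_X_powr \<delta> = Abs_fps (\<lambda>n. (-1) ^ n * (\<delta> gchoose n))"

definition theta0 :: "nat \<Rightarrow> nat \<Rightarrow> (nat \<Rightarrow> real) \<Rightarrow> (nat \<Rightarrow> real) \<Rightarrow> real \<Rightarrow> nat \<Rightarrow> real" where
  "theta0 p q a b d0 i =
     (if 1 \<le> i \<and> i \<le> p then a i
      else if p < i \<and> i \<le> p + q then b (i - p)
      else if i = p + q + 1 then d0 else 0)"

definition lam_series :: "nat \<Rightarrow> nat \<Rightarrow> (nat \<Rightarrow> real) \<Rightarrow> (nat \<Rightarrow> real) \<Rightarrow> real fps" where
  "lam_series p q \<theta>0 \<theta> =
     inverse (fps_of_poly (b_theta p q \<theta>)) * fps_of_poly (a_theta p \<theta>)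
     * one_minus_X_powr (\<theta> (p + q + 1) - \<theta>0 (p + q + 1))
     * inverse (fps_of_poly (a_theta p \<theta>0)) * fps_of_poly (b_theta p q \<theta>0)"

end

theory Submission
  imports Defs "HOL-Complex_Analysis.Complex_Analysis"
begin

(* At theta_0 the series is 1, and perturbing a single coordinate by t gives it in closed form:
   1 - t z^k a^{-1}(z) for an AR coordinate k, (1 - t z^j b^{-1}(z))^{-1} for the MA coordinate p + j,
   and (1 - z)^t for d. Differentiating the i-th coefficient at t = 0 gives -(a^{-1})_{i-k},
   (b^{-1})_{i-j} and -1/i. Since a and b have no zeros in the closed unit disc, a^{-1} and b^{-1}
   are holomorphic on a disc of radius r > 1, so their coefficients are O(r^{-n}), a fortiori O(1/n). *)

unbundle no vec_syntax

lemma inverse_one_minus_fps_nth: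
  fixes x :: "'a::field fps"
  assumes "x $ 0 = 0"
  shows "inverse (1 - x) $ i = (\<Sum>n\<le>i. (x ^ n) $ i)"
proof -
  have "inverse (1 - x) = inverse (1 - fps_X) oo x"
    using assms by (simp add: fps_inverse_compose fps_compose_sub_distrib)
  also have "inverse (1 - fps_X) = Abs_fps (\<lambda>_. 1 :: 'a)"
    by (metis fps_inverse_gp' fps_inverse_idempotent fps_nth_Abs_fps one_neq_zero)
  finally show ?thesis by (simp add: fps_compose_nth atMost_atLeast0)
qed

lemma has_real_derivative_gbinomial_at_0:
  "((\<lambda>t::real. t gchoose Suc m) has_real_derivative (-1) ^ m / real (Suc m)) (at 0)"
proof -
  define G where "G t = (\<Prod>x\<in>{1..m}. t - real x) / fact (Suc m)" for t :: real
  have "(t gchoose Suc m) - (0 gchoose Suc m) = G t * (t - 0)" for t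
    by (simp add: gbinomial_Suc G_def prod.atLeast_Suc_atMost atLeast0AtMost[symmetric])
  moreover have "isCont G 0"
    unfolding G_def by (intro continuous_intros) auto
  moreover have "G 0 = (-1) ^ m / real (Suc m)"
  proof -
    have "(\<Prod>x\<in>{1..m}. 0 - real x) = (-1) ^ m * fact m"
      by (simp add: prod_uminus fact_prod)
    then show ?thesis
      by (simp add: G_def)
  qed
  ultimately show ?thesis
    unfolding CARAT_DERIV by blast
qed

lemma has_real_derivative_sum_powers_at_0:
  assumes "1 \<le> i"
  shows "((\<lambda>t::real. \<Sum>n\<le>i. t ^ n * c n) has_real_derivative c 1) (at 0)"
proof -
  have "((\<lambda>t::real. \<Sum>n\<le>i. t ^ n * c n) has_real_derivative
          (\<Sum>n\<le>i. real n * 0 ^ (n - 1) * c n)) (at 0)"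
    by (auto intro!: derivative_eq_intros)
  also have "(\<Sum>n\<le>i. real n * 0 ^ (n - 1) * c n) = (\<Sum>n\<le>i. if n = 1 then c 1 else 0)"
    by (rule sum.cong) auto
  finally show ?thesis
    using assms by simp
qed

lemma inverse_fps_of_poly_map_of_real_nth:
  fixes P :: "real poly"
  assumes "coeff P 0 \<noteq> 0"
  shows "inverse (fps_of_poly (map_poly complex_of_real P)) $ n
           = complex_of_real (inverse (fps_of_poly P) $ n)"
proof -
  define G where "G = Abs_fps (\<lambda>n. complex_of_real (inverse (fps_of_poly P) $ n))"
  have "fps_of_poly (map_poly complex_of_real P) * G = 1"
  proof (rule fps_ext)
    fix m
    have "(fps_of_poly P * inverse (fps_of_poly P)) $ m = (1 :: real fps) $ m"
      using assms by (simp add: inverse_mult_eq_1')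
    then have "complex_of_real (\<Sum>i=0..m. coeff P i * inverse (fps_of_poly P) $ (m - i))
                 = (1 :: complex fps) $ m"
      by (simp add: fps_mult_nth)
    then show "(fps_of_poly (map_poly complex_of_real P) * G) $ m = (1 :: complex fps) $ m"
      by (simp add: fps_mult_nth G_def coeff_map_poly)
  qed
  then have "inverse (fps_of_poly (map_poly complex_of_real P)) = G"
    by (rule fps_inverse_unique)
  then show ?thesis
    by (simp add: G_def)
qed

lemma summable_inverse_fps_of_poly_geometric:
  fixes P :: "real poly"
  assumes no_roots: "\<forall>z::complex. cmod z \<le> 1 \<longrightarrow> poly (map_poly complex_of_real P) z \<noteq> 0"
  shows "\<exists>r>1. summable (\<lambda>n. \<bar>inverse (fps_of_poly P) $ n\<bar> * r ^ n)"
proof -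
  define Q where "Q = map_poly complex_of_real P"
  have "poly Q 0 \<noteq> 0"
    using no_roots by (simp add: Q_def)
  then have P0: "coeff P 0 \<noteq> 0" and Q0: "fps_of_poly Q $ 0 \<noteq> 0"
    by (simp_all add: Q_def poly_0_coeff_0 coeff_map_poly)
  have roots_finite: "finite {z. poly Q z = 0}"
    using \<open>poly Q 0 \<noteq> 0\<close> by (intro poly_roots_finite) auto
  define R where "R = Min (insert 2 (norm ` {z. poly Q z = 0}))"
  have "R > 1"
    unfolding R_def using roots_finite no_roots
    by (subst Min_gr_iff) (auto simp: Q_def not_le[symmetric])
  have "poly Q z \<noteq> 0" if "norm z < R" for z
  proof
    assume "poly Q z = 0"
    then have "R \<le> norm z"
      unfolding R_def using roots_finite by (intro Min_le) auto
    with that show False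
      by simp
  qed
  then have "(\<lambda>z. inverse (poly Q z)) holomorphic_on eball 0 (ereal R)"
    by (auto intro!: holomorphic_intros)
  moreover have "(\<lambda>z. inverse (poly Q z)) has_fps_expansion inverse (fps_of_poly Q)"
  proof (rule has_fps_expansion_inverse)
    have "eval_fps (fps_of_poly Q) = poly Q"
      by (rule ext) simp
    then show "poly Q has_fps_expansion fps_of_poly Q"
      using eval_fps_has_fps_expansion[of "fps_of_poly Q"] by simp
  qed (rule Q0)
  ultimately have radius: "ereal R \<le> fps_conv_radius (inverse (fps_of_poly Q))"
    by (rule holomorphic_on_imp_fps_conv_radius_ge[rotated])
  define r where "r = (1 + R) / 2"
  have "1 < r" "r < R"
    using \<open>R > 1\<close> by (simp_all add: r_def)
  then have "ereal (norm (complex_of_real r)) < ereal R"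
    by simp
  then have "ereal (norm (complex_of_real r)) < fps_conv_radius (inverse (fps_of_poly Q))"
    using radius by (rule less_le_trans)
  then have "summable (\<lambda>n. norm (inverse (fps_of_poly Q) $ n * complex_of_real r ^ n))"
    unfolding fps_conv_radius_def by (rule abs_summable_in_conv_radius)
  then have "summable (\<lambda>n. \<bar>inverse (fps_of_poly P) $ n\<bar> * r ^ n)"
    using \<open>1 < r\<close> by (simp add: Q_def inverse_fps_of_poly_map_of_real_nth[OF P0] norm_mult norm_power)
  with \<open>1 < r\<close> show ?thesis
    by blast
qed

lemma summable_geometric_imp_linear_bound:
  fixes c :: "nat \<Rightarrow> real"
  assumes "1 < r" "summable (\<lambda>n. \<bar>c n\<bar> * r ^ n)"
  shows "\<exists>M. \<forall>n. (real n + real N) * \<bar>c n\<bar> \<le> M"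
proof -
  have bounded_weighted: "Bseq (\<lambda>n. \<bar>c n\<bar> * r ^ n)"
    using summable_LIMSEQ_zero[OF assms(2)] by (intro convergent_imp_Bseq convergentI)
  have "(\<lambda>n. real n / r ^ n + real N * (1 / r) ^ n) \<longlonglongrightarrow> 0 + real N * 0"
    using assms(1) by (intro tendsto_intros lim_n_over_pown LIMSEQ_power_zero) auto
  then have "Bseq (\<lambda>n. real n / r ^ n + real N * (1 / r) ^ n)"
    by (intro convergent_imp_Bseq convergentI)
  then have "Bseq (\<lambda>n. (real n / r ^ n + real N * (1 / r) ^ n) * (\<bar>c n\<bar> * r ^ n))"
    using bounded_weighted by (rule Bseq_mult)
  moreover have "(real n / r ^ n + real N * (1 / r) ^ n) * (\<bar>c n\<bar> * r ^ n)
                   = (real n + real N) * \<bar>c n\<bar>" for n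
    using assms(1) by (simp add: field_simps power_divide)
  ultimately obtain M where "\<And>n. \<bar>(real n + real N) * \<bar>c n\<bar>\<bar> \<le> M"
    unfolding Bseq_def by auto
  then show ?thesis
    by (meson abs_ge_self order_trans)
qed

lemma fps_X_power_mult_nth_le:
  fixes F :: "real fps"
  assumes M: "\<And>n. (real n + real N) * \<bar>F $ n\<bar> \<le> M" and "j \<le> N" "1 \<le> i"
  shows "\<bar>(fps_X ^ j * F) $ i\<bar> \<le> M / real i"
proof (cases "i < j")
  case True
  have "0 \<le> M"
    using M[of 0] by (meson abs_ge_zero of_nat_0_le_iff order_trans mult_nonneg_nonneg add_nonneg_nonneg)
  with True show ?thesis
    by (simp add: fps_X_power_mult_nth)
next
  case False
  have "real i * \<bar>F $ (i - j)\<bar> \<le> (real (i - j) + real N) * \<bar>F $ (i - j)\<bar>"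
    using False assms(2) by (intro mult_right_mono) auto
  also have "\<dots> \<le> M"
    by (rule M)
  finally have "\<bar>F $ (i - j)\<bar> \<le> M / real i"
    using assms(3) by (simp add: field_simps)
  with False show ?thesis
    by (simp add: fps_X_power_mult_nth)
qed

lemma fps_X_power_mult_inverse_poly_nth_bound:
  fixes P :: "real poly"
  assumes "\<forall>z::complex. cmod z \<le> 1 \<longrightarrow> poly (map_poly complex_of_real P) z \<noteq> 0"
  shows "\<exists>M. \<forall>j\<le>N. \<forall>i\<ge>1. \<bar>(fps_X ^ j * inverse (fps_of_poly P)) $ i\<bar> \<le> M / real i"
proof -
  obtain r where "1 < r" "summable (\<lambda>n. \<bar>inverse (fps_of_poly P) $ n\<bar> * r ^ n)"
    using summable_inverse_fps_of_poly_geometric[OF assms] by blast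
  then obtain M where "\<And>n. (real n + real N) * \<bar>inverse (fps_of_poly P) $ n\<bar> \<le> M"
    using summable_geometric_imp_linear_bound by blast
  then show ?thesis
    by (blast intro: fps_X_power_mult_nth_le)
qed

lemma coeff_one_minus_poly_0 [simp]: "coeff (one_minus_poly n c) 0 = 1"
  by (simp add: one_minus_poly_def coeff_sum)

lemma one_minus_poly_cong:
  assumes "\<And>i. 1 \<le> i \<Longrightarrow> i \<le> n \<Longrightarrow> c i = c' i"
  shows "one_minus_poly n c = one_minus_poly n c'"
  unfolding one_minus_poly_def using assms by (auto intro!: sum.cong)

lemma one_minus_poly_update:
  assumes "1 \<le> k" "k \<le> n"
  shows "one_minus_poly n (c(k := c k + t)) = one_minus_poly n c - monom t k"
proof -
  have "(\<Sum>i=1..n. monom ((c(k := c k + t)) i) i)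
        = (\<Sum>i=1..n. monom (c i) i + (if i = k then monom t k else 0))"
    by (rule sum.cong) (auto simp: add_monom[symmetric])
  also have "\<dots> = (\<Sum>i=1..n. monom (c i) i) + monom t k"
    using assms by (simp add: sum.distrib)
  finally show ?thesis
    by (simp add: one_minus_poly_def algebra_simps)
qed

lemma one_minus_X_powr_0 [simp]: "one_minus_X_powr 0 = 1"
  by (simp add: one_minus_X_powr_def fps_eq_iff gbinomial_0_left)

lemma a_theta_fun_upd_notin:
  assumes "k \<notin> {1..p}"
  shows "a_theta p (\<theta>(k := x)) = a_theta p \<theta>"
  unfolding a_theta_def using assms by (intro one_minus_poly_cong) auto

lemma b_theta_fun_upd_notin:
  assumes "k \<notin> {p<..p + q}"
  shows "b_theta p q (\<theta>(k := x)) = b_theta p q \<theta>"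
  unfolding b_theta_def using assms by (intro one_minus_poly_cong) auto

lemma b_theta_update_ma:
  assumes "p < k" "k \<le> p + q"
  shows "b_theta p q (\<theta>(k := \<theta> k + t)) = b_theta p q \<theta> - monom t (k - p)"
proof -
  have "(\<lambda>j. (\<theta>(k := \<theta> k + t)) (p + j)) = (\<lambda>j. \<theta> (p + j))(k - p := \<theta> k + t)"
    using assms by (auto simp: fun_eq_iff)
  then show ?thesis
    using assms one_minus_poly_update[of "k - p" q "\<lambda>j. \<theta> (p + j)" t]
    by (simp add: b_theta_def)
qed

lemma a_theta_theta0: "a_theta p (theta0 p q a b d0) = one_minus_poly p a"
  unfolding a_theta_def by (rule one_minus_poly_cong) (simp add: theta0_def)

lemma b_theta_theta0: "b_theta p q (theta0 p q a b d0) = one_minus_poly q b"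
  unfolding b_theta_def by (rule one_minus_poly_cong) (simp add: theta0_def)

lemma lam_series_update_ar:
  assumes "1 \<le> k" "k \<le> p"
  shows "lam_series p q \<theta>\<^sub>0 (\<theta>\<^sub>0(k := \<theta>\<^sub>0 k + t))
           = 1 - fps_const t * (fps_X ^ k * inverse (fps_of_poly (a_theta p \<theta>\<^sub>0)))"
proof -
  define A where "A = fps_of_poly (a_theta p \<theta>\<^sub>0)"
  define B where "B = fps_of_poly (b_theta p q \<theta>\<^sub>0)"
  have AB: "A * inverse A = 1" "inverse B * B = 1"
    by (simp_all add: A_def B_def a_theta_def b_theta_def inverse_mult_eq_1 inverse_mult_eq_1')
  have "a_theta p (\<theta>\<^sub>0(k := \<theta>\<^sub>0 k + t)) = a_theta p \<theta>\<^sub>0 - monom t k"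
    using assms by (simp add: a_theta_def one_minus_poly_update)
  then have "lam_series p q \<theta>\<^sub>0 (\<theta>\<^sub>0(k := \<theta>\<^sub>0 k + t))
               = inverse B * (A - fps_const t * fps_X ^ k) * inverse A * B"
    using assms by (simp add: lam_series_def b_theta_fun_upd_notin fps_of_poly_diff
        fps_of_poly_monom A_def B_def)
  also have "\<dots> = (inverse B * B) * (A * inverse A)
                   - fps_const t * (fps_X ^ k * inverse A) * (inverse B * B)"
    by (simp add: algebra_simps)
  also have "\<dots> = 1 - fps_const t * (fps_X ^ k * inverse A)"
    by (simp add: AB)
  finally show ?thesis
    by (simp only: A_def)
qed

lemma lam_series_update_ma:
  assumes "p < k" "k \<le> p + q"
  shows "lam_series p q \<theta>\<^sub>0 (\<theta>\<^sub>0(k := \<theta>\<^sub>0 k + t))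
           = inverse (1 - fps_const t * (fps_X ^ (k - p) * inverse (fps_of_poly (b_theta p q \<theta>\<^sub>0))))"
proof -
  define A where "A = fps_of_poly (a_theta p \<theta>\<^sub>0)"
  define B where "B = fps_of_poly (b_theta p q \<theta>\<^sub>0)"
  define g where "g = fps_X ^ (k - p) * inverse B"
  have AB: "A * inverse A = 1" "inverse B * B = 1"
    by (simp_all add: A_def B_def a_theta_def b_theta_def inverse_mult_eq_1 inverse_mult_eq_1')
  have "B - fps_const t * fps_X ^ (k - p) = B * (1 - fps_const t * g)"
    using AB by (simp add: g_def algebra_simps)
  then have "lam_series p q \<theta>\<^sub>0 (\<theta>\<^sub>0(k := \<theta>\<^sub>0 k + t))
               = inverse B * inverse (1 - fps_const t * g) * A * inverse A * B"
    using assms by (simp add: lam_series_def a_theta_fun_upd_notin b_theta_update_ma fps_of_poly_diff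
        fps_of_poly_monom fps_inverse_mult A_def B_def)
  also have "\<dots> = inverse (1 - fps_const t * g) * (A * inverse A) * (inverse B * B)"
    by (simp add: algebra_simps)
  also have "\<dots> = inverse (1 - fps_const t * g)"
    by (simp add: AB)
  finally show ?thesis
    by (simp only: g_def B_def)
qed

lemma lam_series_update_d:
  "lam_series p q \<theta>\<^sub>0 (\<theta>\<^sub>0(p + q + 1 := \<theta>\<^sub>0 (p + q + 1) + t)) = one_minus_X_powr t"
proof -
  define A where "A = fps_of_poly (a_theta p \<theta>\<^sub>0)"
  define B where "B = fps_of_poly (b_theta p q \<theta>\<^sub>0)"
  have AB: "A * inverse A = 1" "inverse B * B = 1"
    by (simp_all add: A_def B_def a_theta_def b_theta_def inverse_mult_eq_1 inverse_mult_eq_1')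
  have "lam_series p q \<theta>\<^sub>0 (\<theta>\<^sub>0(p + q + 1 := \<theta>\<^sub>0 (p + q + 1) + t))
          = one_minus_X_powr t * (A * inverse A) * (inverse B * B)"
    by (simp add: lam_series_def a_theta_fun_upd_notin b_theta_fun_upd_notin A_def B_def algebra_simps)
  then show ?thesis
    by (simp add: AB)
qed

lemma lam_series_update_ar_nth_deriv:
  assumes "1 \<le> k" "k \<le> p"
  shows "((\<lambda>t. lam_series p q \<theta>\<^sub>0 (\<theta>\<^sub>0(k := \<theta>\<^sub>0 k + t)) $ i) has_real_derivative
           - (fps_X ^ k * inverse (fps_of_poly (a_theta p \<theta>\<^sub>0))) $ i) (at 0)"
  using assms by (simp add: lam_series_update_ar) (auto intro!: derivative_eq_intros)

lemma lam_series_update_ma_nth_deriv: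
  assumes "p < k" "k \<le> p + q" "1 \<le> i"
  shows "((\<lambda>t. lam_series p q \<theta>\<^sub>0 (\<theta>\<^sub>0(k := \<theta>\<^sub>0 k + t)) $ i) has_real_derivative
           (fps_X ^ (k - p) * inverse (fps_of_poly (b_theta p q \<theta>\<^sub>0))) $ i) (at 0)"
proof -
  define g where "g = fps_X ^ (k - p) * inverse (fps_of_poly (b_theta p q \<theta>\<^sub>0))"
  have "g $ 0 = 0"
    using assms by (simp add: g_def fps_X_power_mult_nth)
  then have "lam_series p q \<theta>\<^sub>0 (\<theta>\<^sub>0(k := \<theta>\<^sub>0 k + t)) $ i = (\<Sum>n\<le>i. t ^ n * (g ^ n) $ i)" for t
    using assms by (simp add: lam_series_update_ma inverse_one_minus_fps_nth power_mult_distrib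
        flip: g_def)
  then show ?thesis
    using has_real_derivative_sum_powers_at_0[OF assms(3), of "\<lambda>n. (g ^ n) $ i"]
    by (simp add: g_def)
qed

lemma lam_series_update_d_nth_deriv:
  assumes "1 \<le> i"
  shows "((\<lambda>t. lam_series p q \<theta>\<^sub>0 (\<theta>\<^sub>0(p + q + 1 := \<theta>\<^sub>0 (p + q + 1) + t)) $ i)
           has_real_derivative -1 / real i) (at 0)"
proof -
  obtain m where i: "i = Suc m"
    using assms by (cases i) auto
  have "((\<lambda>t. (-1) ^ i * (t gchoose i)) has_real_derivative (-1) ^ i * ((-1) ^ m / real i)) (at 0)"
    unfolding i by (intro DERIV_cmult has_real_derivative_gbinomial_at_0)
  then show ?thesis
    unfolding lam_series_update_d by (simp add: one_minus_X_powr_def i)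
qed

lemma lam_series_update_nth_deriv_bound:
  assumes MA: "\<forall>j\<le>p. \<forall>i\<ge>1.
      \<bar>(fps_X ^ j * inverse (fps_of_poly (a_theta p \<theta>\<^sub>0))) $ i\<bar> \<le> MA / real i"
    and MB: "\<forall>j\<le>q. \<forall>i\<ge>1.
      \<bar>(fps_X ^ j * inverse (fps_of_poly (b_theta p q \<theta>\<^sub>0))) $ i\<bar> \<le> MB / real i"
    and i: "1 \<le> i" and k: "k \<in> {1..p+q+1}"
  shows "\<exists>D. ((\<lambda>t. lam_series p q \<theta>\<^sub>0 (\<theta>\<^sub>0(k := \<theta>\<^sub>0 k + t)) $ i) has_real_derivative D) (at 0)
           \<and> \<bar>D\<bar> \<le> (\<bar>MA\<bar> + \<bar>MB\<bar> + 1) / real i"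
proof -
  define K where "K = \<bar>MA\<bar> + \<bar>MB\<bar> + 1"
  have le_K: "M / real i \<le> K / real i" if "M \<le> K" for M
    using that by (simp add: divide_right_mono)
  consider "k \<le> p" | "p < k" "k \<le> p + q" | "k = p + q + 1"
    using k by fastforce
  then show ?thesis
  proof cases
    case 1
    have "\<bar>(fps_X ^ k * inverse (fps_of_poly (a_theta p \<theta>\<^sub>0))) $ i\<bar> \<le> MA / real i"
      using MA 1 i by blast
    also have "\<dots> \<le> K / real i"
      by (rule le_K) (simp add: K_def)
    finally show ?thesis
      using 1 k lam_series_update_ar_nth_deriv[of k p] by (fastforce simp: K_def)
  next
    case 2
    have "\<bar>(fps_X ^ (k - p) * inverse (fps_of_poly (b_theta p q \<theta>\<^sub>0))) $ i\<bar> \<le> MB / real i"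
      using MB 2 i by simp
    also have "\<dots> \<le> K / real i"
      by (rule le_K) (simp add: K_def)
    finally show ?thesis
      using 2 i lam_series_update_ma_nth_deriv unfolding K_def by blast
  next
    case 3
    have "\<bar>-1 / real i\<bar> \<le> K / real i"
      using le_K[of 1] by (simp add: K_def)
    then show ?thesis
      using 3 i lam_series_update_d_nth_deriv unfolding K_def by blast
  qed
qed

theorem lemma3:
  fixes p q :: nat and a b :: "nat \<Rightarrow> real" and d0 :: real
  assumes "-1/2 < d0" "d0 < 1/2"
    and "\<forall>z::complex. cmod z \<le> 1 \<longrightarrow> poly (map_poly complex_of_real (one_minus_poly p a)) z \<noteq> 0"
    and "\<forall>z::complex. cmod z \<le> 1 \<longrightarrow> poly (map_poly complex_of_real (one_minus_poly q b)) z \<noteq> 0"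
    and "coprime (one_minus_poly p a) (one_minus_poly q b)"
  shows "\<exists>K::real. \<forall>i\<ge>1. \<forall>k\<in>{1..p+q+1}.
           (let \<theta>\<^sub>0 = theta0 p q a b d0 in
            \<exists>D. ((\<lambda>t. fps_nth (lam_series p q \<theta>\<^sub>0 (\<theta>\<^sub>0(k := \<theta>\<^sub>0 k + t))) i)
                   has_real_derivative D) (at 0)
                \<and> \<bar>D\<bar> \<le> K / real i)"
proof -
  define \<theta>\<^sub>0 where "\<theta>\<^sub>0 = theta0 p q a b d0"
  obtain MA where "\<forall>j\<le>p. \<forall>i\<ge>1.
      \<bar>(fps_X ^ j * inverse (fps_of_poly (a_theta p \<theta>\<^sub>0))) $ i\<bar> \<le> MA / real i"
    using fps_X_power_mult_inverse_poly_nth_bound[OF assms(3), of p]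
    unfolding \<theta>\<^sub>0_def a_theta_theta0 by blast
  moreover obtain MB where "\<forall>j\<le>q. \<forall>i\<ge>1.
      \<bar>(fps_X ^ j * inverse (fps_of_poly (b_theta p q \<theta>\<^sub>0))) $ i\<bar> \<le> MB / real i"
    using fps_X_power_mult_inverse_poly_nth_bound[OF assms(4), of q]
    unfolding \<theta>\<^sub>0_def b_theta_theta0 by blast
  ultimately show ?thesis
    unfolding Let_def \<theta>\<^sub>0_def[symmetric] by (blast intro: lam_series_update_nth_deriv_bound)
qed

end
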